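(* Let $\Omega$ be an open subset of $\mathbb{H}$ such that, for every $I\in\mathbb{S}$, $\Omega_I=\Omega\cap L_I$ is an angle $\{re^{I(\zeta_I+\vartheta)}: r>0,\ |\vartheta|<\varphi_I/2\}$ with $\zeta_I\in\mathbb{R}$ and $0<\varphi_I<2\pi$. If the maps $\mathbb{S}\to\mathbb{R}$, $I\mapsto\zeta_I$ and $I\mapsto\varphi_I$ are continuous, then $\Omega$ is a slice domain.
   Context: $\mathbb{H}$ denotes the quaternions; $\mathbb{S}=\{ix_1+jx_2+kx_3: x_1^2+x_2^2+x_3^2=1\}$ (a 2-sphere); for $I\in\mathbb{S}$, $L_I=\mathbb{R}+\mathbb{R}I$ and $e^{I\vartheta}=\cos\vartheta+I\sin\vartheta$. A domain $\Omega\subseteq\mathbb{H}$ is a slice domain if $\Omega\cap\mathbb{R}\ne\emptyset$ and $\Omega\cap L_I$ is a domain (open connected set) in $L_I$ for every $I\in\mathbb{S}$. (Here "slice domain" is understood to include that $\Omega$ is a domain.) *)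

theory Defs
  imports "HOL-Analysis.Analysis"
begin

text \<open>Quaternions modelled as the real vector space real^4 with basis 1, i, j, k
  (coordinate 1 = real part). Only the real-linear structure and the Euclidean
  topology are needed for this statement.\<close>

type_synonym quat = "real^4"

definition qone :: quat where "qone = axis 1 1"

definition qreal :: "real \<Rightarrow> quat" where "qreal a = a *\<^sub>R qone"

definition sphS :: "quat set" where
  "sphS = {q. q $ 1 = 0 \<and> (q $ 2)\<^sup>2 + (q $ 3)\<^sup>2 + (q $ 4)\<^sup>2 = 1}"

definition sliceL :: "quat \<Rightarrow> quat set" where
  "sliceL I = {a *\<^sub>R qone + b *\<^sub>R I | a b. True}"

definition qexpI :: "quat \<Rightarrow> real \<Rightarrow> quat" where
  "qexpI I t = cos t *\<^sub>R qone + sin t *\<^sub>R I"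

definition angle_set :: "quat \<Rightarrow> real \<Rightarrow> real \<Rightarrow> quat set" where
  "angle_set I \<zeta> \<phi> = {r *\<^sub>R qexpI I (\<zeta> + \<theta>) | r \<theta>. r > 0 \<and> \<bar>\<theta>\<bar> < \<phi> / 2}"

definition slice_domain :: "quat set \<Rightarrow> bool" where
  "slice_domain \<Omega> \<longleftrightarrow> open \<Omega> \<and> connected \<Omega> \<and> \<Omega> \<inter> range qreal \<noteq> {} \<and>
     (\<forall>I\<in>sphS. openin (top_of_set (sliceL I)) (\<Omega> \<inter> sliceL I) \<and>
                connected (\<Omega> \<inter> sliceL I) \<and> \<Omega> \<inter> sliceL I \<noteq> {})"

end

theory Submission
  imports Defs
begin

text \<open>Suppose \<open>\<Omega>\<close> misses the real axis. Then each angle \<open>\<Omega>\<^sub>I\<close> lies in one of the two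
  open half-planes of \<open>L\<^sub>I\<close> bounded by \<open>\<real>\<close>, so \<open>sin \<zeta>\<^sub>I \<noteq> 0\<close>. Since \<open>L\<^bsub>-I\<^esub> = L\<^sub>I\<close> with the
  orientation reversed, \<open>sin \<zeta>\<^sub>I\<close> and \<open>sin \<zeta>\<^bsub>-I\<^esub>\<close> have opposite signs, which is impossible for
  a continuous nowhere vanishing function on the connected sphere \<open>\<bbbS>\<close>. Hence \<open>\<Omega>\<close> contains a
  real point; it lies on every slice, so \<open>\<Omega>\<close> is a union of connected angles with a common
  point.\<close>

lemma qone_nth: "qone $ i = (if i = 1 then 1 else 0)"
  by (simp add: qone_def axis_def)

lemma sphS_iff: "I \<in> sphS \<longleftrightarrow> I $ 1 = 0 \<and> norm I = 1"
  by (auto simp: sphS_def norm_vec_def L2_set_def sum_4)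

lemma uminus_sphS: "I \<in> sphS \<Longrightarrow> - I \<in> sphS"
  by (simp add: sphS_iff)

lemma axis_2_in_sphS: "axis 2 1 \<in> sphS"
  by (simp add: sphS_def axis_def)

lemma inner_sliceL_generator:
  assumes "I \<in> sphS"
  shows "(a *\<^sub>R qone + b *\<^sub>R I) \<bullet> I = b"
proof -
  have "qone \<bullet> I = 0" "I \<bullet> I = 1"
    using assms by (simp_all add: sphS_iff qone_def inner_axis' dot_square_norm)
  then show ?thesis by (simp add: inner_add_left)
qed

lemma sliceL_uminus: "sliceL (- I) = sliceL I"
  unfolding sliceL_def by (metis (no_types, opaque_lifting) minus_minus scaleR_minus_left scaleR_minus_right)

lemma qreal_in_sliceL: "qreal a \<in> sliceL I"
proof -
  have "qreal a = a *\<^sub>R qone + 0 *\<^sub>R I"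
    by (simp add: qreal_def)
  then show ?thesis unfolding sliceL_def by blast
qed

lemma Union_sliceL_sphS: "(\<Union>I\<in>sphS. sliceL I) = UNIV"
proof -
  have "\<exists>I\<in>sphS. q \<in> sliceL I" for q
  proof -
    define v where "v = q - (q $ 1) *\<^sub>R qone"
    have v1: "v $ 1 = 0"
      by (simp add: v_def qone_nth)
    have "q \<in> sliceL I" if "v = b *\<^sub>R I" for I b
    proof -
      have "q = (q $ 1) *\<^sub>R qone + b *\<^sub>R I"
        using that by (simp add: v_def algebra_simps)
      then show ?thesis unfolding sliceL_def by blast
    qed
    moreover have "\<exists>I\<in>sphS. \<exists>b. v = b *\<^sub>R I"
    proof (cases "v = 0")
      case True
      then show ?thesis by (intro bexI[OF _ axis_2_in_sphS] exI[of _ 0]) simp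
    next
      case False
      then have "v /\<^sub>R norm v \<in> sphS"
        using v1 by (simp add: sphS_iff norm_divide)
      with False show ?thesis by (auto intro!: bexI exI[of _ "norm v"])
    qed
    ultimately show ?thesis by blast
  qed
  then show ?thesis by blast
qed

lemma qexpI_uminus: "qexpI (- I) t = qexpI I (- t)"
  by (simp add: qexpI_def)

lemma angle_set_uminus: "angle_set (- I) \<zeta> \<phi> = angle_set I (- \<zeta>) \<phi>"
  unfolding angle_set_def qexpI_uminus
  by (smt (verit, best) Collect_cong abs_minus_cancel minus_add_distrib)

lemma connected_real_same_sign:
  fixes U :: "real set"
  assumes "connected U" "0 \<notin> U" "x \<in> U" "y \<in> U"
  shows "0 < x \<longleftrightarrow> 0 < y"
  using connectedD_interval[OF assms(1,3,4), of 0] connectedD_interval[OF assms(1,4,3), of 0] assms(2)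
  by (metis linorder_not_le order_le_less)

lemma connected_sphS: "connected sphS"
proof -
  define e :: "real^3 \<Rightarrow> quat" where
    "e x = (\<chi> i. if i = 1 then 0 else if i = 2 then x $ 1 else if i = 3 then x $ 2 else x $ 3)" for x
  have e_nth: "e x $ 1 = 0" "e x $ 2 = x $ 1" "e x $ 3 = x $ 2" "e x $ 4 = x $ 3" for x
    by (simp_all add: e_def)
  have "continuous_on UNIV e"
    unfolding e_def
    by (intro continuous_on_vec_lambda, case_tac "i = 1"; case_tac "i = 2"; case_tac "i = 3")
      (simp_all add: continuous_on_component)
  moreover have "sphS = e ` sphere 0 1"
  proof
    show "e ` sphere 0 1 \<subseteq> sphS"
      by (auto simp: e_nth sphS_def norm_vec_def L2_set_def sum_3)
    show "sphS \<subseteq> e ` sphere 0 1"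
    proof
      fix q assume q: "q \<in> sphS"
      define x :: "real^3" where "x = (\<chi> j. if j = 1 then q $ 2 else if j = 2 then q $ 3 else q $ 4)"
      have "x \<in> sphere 0 1"
        using q by (simp add: x_def sphS_def norm_vec_def L2_set_def sum_3)
      moreover have "q = e x"
        using q by (simp add: vec_eq_iff forall_4 e_nth x_def sphS_def)
      ultimately show "q \<in> e ` sphere 0 1" by blast
    qed
  qed
  moreover have "connected (sphere (0::real^3) 1)"
    by (simp add: connected_sphere_eq)
  ultimately show ?thesis
    by (metis connected_continuous_image continuous_on_subset subset_UNIV)
qed

lemma angle_setE:
  assumes "q \<in> angle_set I \<zeta> \<phi>"
  obtains r \<theta> where "q = r *\<^sub>R qexpI I (\<zeta> + \<theta>)" "0 < r" "\<bar>\<theta>\<bar> < \<phi> / 2"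
  using assms unfolding angle_set_def by (elim CollectE exE conjE) simp

lemma qexpI_in_angle_set: "\<bar>\<theta>\<bar> < \<phi> / 2 \<Longrightarrow> qexpI I (\<zeta> + \<theta>) \<in> angle_set I \<zeta> \<phi>"
  unfolding angle_set_def by (rule CollectI, rule exI[of _ 1], rule exI[of _ \<theta>]) simp

lemma connected_angle_set: "connected (angle_set I \<zeta> \<phi>)"
proof -
  have "angle_set I \<zeta> \<phi> = (\<lambda>(r, \<theta>). r *\<^sub>R qexpI I (\<zeta> + \<theta>)) ` ({0<..} \<times> {-\<phi>/2<..<\<phi>/2})"
    (is "_ = ?R")
  proof (intro equalityI subsetI)
    fix x assume "x \<in> angle_set I \<zeta> \<phi>"
    then obtain r \<theta> where "x = r *\<^sub>R qexpI I (\<zeta> + \<theta>)" "0 < r" "\<bar>\<theta>\<bar> < \<phi> / 2"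
      by (rule angle_setE)
    then show "x \<in> ?R" by (intro image_eqI[of _ _ "(r, \<theta>)"]) (auto simp: abs_less_iff)
  next
    fix x assume "x \<in> ?R"
    then obtain r \<theta> where "x = r *\<^sub>R qexpI I (\<zeta> + \<theta>)" "0 < r" "\<bar>\<theta>\<bar> < \<phi> / 2"
      by (auto simp: abs_less_iff)
    then show "x \<in> angle_set I \<zeta> \<phi>" unfolding angle_set_def by blast
  qed
  moreover have "connected ?R"
  proof (rule connected_continuous_image)
    show "continuous_on ({0<..} \<times> {-\<phi>/2<..<\<phi>/2}) (\<lambda>(r, \<theta>). r *\<^sub>R qexpI I (\<zeta> + \<theta>))"
      unfolding qexpI_def case_prod_unfold by (intro continuous_intros)
    show "connected ({0::real<..} \<times> {-\<phi>/2<..<\<phi>/2})"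
      by (rule convex_connected, rule convex_Times) (auto intro: convex_real_interval)
  qed
  ultimately show ?thesis by simp
qed

lemma sin_sign_on_angle_set:
  assumes disj: "angle_set I \<zeta> \<phi> \<inter> range qreal = {}" and \<theta>: "\<bar>\<theta>\<bar> < \<phi> / 2"
  shows "sin (\<zeta> + \<theta>) \<noteq> 0" and "0 < sin (\<zeta> + \<theta>) \<longleftrightarrow> 0 < sin \<zeta>"
proof -
  have nonzero: "sin (\<zeta> + t) \<noteq> 0" if "\<bar>t\<bar> < \<phi> / 2" for t
  proof
    assume "sin (\<zeta> + t) = 0"
    then have "qexpI I (\<zeta> + t) = qreal (cos (\<zeta> + t))"
      by (simp add: qexpI_def qreal_def)
    moreover have "qexpI I (\<zeta> + t) \<in> angle_set I \<zeta> \<phi>"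
      using that by (rule qexpI_in_angle_set)
    ultimately show False
      using disj by blast
  qed
  then show "sin (\<zeta> + \<theta>) \<noteq> 0"
    using \<theta> .
  let ?U = "(\<lambda>t. sin (\<zeta> + t)) ` ball 0 (\<phi> / 2)"
  have "connected ?U"
    by (intro connected_continuous_image continuous_intros) simp
  moreover have "0 \<notin> ?U"
    using nonzero by auto
  moreover have "sin (\<zeta> + \<theta>) \<in> ?U" "sin (\<zeta> + 0) \<in> ?U"
    using \<theta> by (intro imageI; simp)+
  ultimately show "0 < sin (\<zeta> + \<theta>) \<longleftrightarrow> 0 < sin \<zeta>"
    by (metis connected_real_same_sign add_0_right)
qed

lemma sin_signs_of_opposite_angle_sets:
  assumes I: "I \<in> sphS" and eq: "angle_set I \<zeta> \<phi> = angle_set (- I) \<zeta>' \<phi>'" and "0 < \<phi>"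
    and disj: "angle_set I \<zeta> \<phi> \<inter> range qreal = {}"
  shows "0 < sin \<zeta> \<longleftrightarrow> sin \<zeta>' < 0"
proof -
  have eq': "angle_set I \<zeta> \<phi> = angle_set I (- \<zeta>') \<phi>'"
    using eq by (simp add: angle_set_uminus)
  have "qexpI I \<zeta> \<in> angle_set I (- \<zeta>') \<phi>'"
    using qexpI_in_angle_set[of 0 \<phi> I \<zeta>] \<open>0 < \<phi>\<close> eq' by simp
  then obtain r \<theta> where r: "qexpI I \<zeta> = r *\<^sub>R qexpI I (- \<zeta>' + \<theta>)" and "0 < r" "\<bar>\<theta>\<bar> < \<phi>' / 2"
    by (rule angle_setE)
  have "sin \<zeta> = r * sin (- \<zeta>' + \<theta>)"
    using arg_cong[OF r, of "\<lambda>q. q \<bullet> I"] inner_sliceL_generator[OF I]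
    by (simp add: qexpI_def scaleR_add_right)
  moreover have "angle_set I (- \<zeta>') \<phi>' \<inter> range qreal = {}"
    using disj eq' by simp
  ultimately show ?thesis
    using sin_sign_on_angle_set[of I "- \<zeta>'" \<phi>' \<theta>] \<open>\<bar>\<theta>\<bar> < \<phi>' / 2\<close> \<open>0 < r\<close>
    by (auto simp: zero_less_mult_iff)
qed

lemma angle_slices_meet_reals:
  assumes slices: "\<forall>I\<in>sphS. \<Omega> \<inter> sliceL I = angle_set I (\<zeta> I) (\<phi> I) \<and> 0 < \<phi> I"
    and cont: "continuous_on sphS \<zeta>"
  shows "\<Omega> \<inter> range qreal \<noteq> {}"
proof
  assume disj: "\<Omega> \<inter> range qreal = {}"
  have avoids: "angle_set I (\<zeta> I) (\<phi> I) \<inter> range qreal = {}" if "I \<in> sphS" for I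
    using disj slices that by blast
  have nonzero: "sin (\<zeta> I) \<noteq> 0" if "I \<in> sphS" for I
    using sin_sign_on_angle_set(1)[OF avoids[OF that], of 0] slices that by simp
  have opposite: "0 < sin (\<zeta> I) \<longleftrightarrow> sin (\<zeta> (- I)) < 0" if I: "I \<in> sphS" for I
  proof (rule sin_signs_of_opposite_angle_sets[OF I _ _ avoids[OF I]])
    show "angle_set I (\<zeta> I) (\<phi> I) = angle_set (- I) (\<zeta> (- I)) (\<phi> (- I))"
      using slices I uminus_sphS[OF I] sliceL_uminus[of I] by metis
    show "0 < \<phi> I"
      using slices I by blast
  qed
  let ?U = "(\<lambda>I. sin (\<zeta> I)) ` sphS"
  have "connected ?U"
    using cont by (intro connected_continuous_image connected_sphS continuous_intros)
  moreover have "0 \<notin> ?U"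
    using nonzero by auto
  moreover have "sin (\<zeta> (axis 2 1)) \<in> ?U" "sin (\<zeta> (- axis 2 1)) \<in> ?U"
    by (intro imageI axis_2_in_sphS uminus_sphS)+
  ultimately have "0 < sin (\<zeta> (axis 2 1)) \<longleftrightarrow> 0 < sin (\<zeta> (- axis 2 1))"
    by (rule connected_real_same_sign)
  then show False
    using opposite[OF axis_2_in_sphS] nonzero[OF uminus_sphS[OF axis_2_in_sphS]] by linarith
qed

lemma connected_if_connected_slices_meet_reals:
  assumes "\<forall>I\<in>sphS. connected (\<Omega> \<inter> sliceL I)" and "\<Omega> \<inter> range qreal \<noteq> {}"
  shows "connected \<Omega>"
proof -
  obtain a where a: "qreal a \<in> \<Omega>"
    using assms(2) by blast
  have "\<Omega> = (\<Union>I\<in>sphS. \<Omega> \<inter> sliceL I)"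
    using Union_sliceL_sphS by blast
  moreover have "connected (\<Union>I\<in>sphS. \<Omega> \<inter> sliceL I)"
  proof (rule connected_Union)
    show "\<Inter> ((\<lambda>I. \<Omega> \<inter> sliceL I) ` sphS) \<noteq> {}"
      using a qreal_in_sliceL by blast
  qed (use assms(1) in blast)
  ultimately show ?thesis
    by simp
qed

theorem proposition4p3:
  fixes \<Omega> :: "quat set" and \<zeta> \<phi> :: "quat \<Rightarrow> real"
  assumes "open \<Omega>"
    and "\<forall>I\<in>sphS. \<Omega> \<inter> sliceL I = angle_set I (\<zeta> I) (\<phi> I) \<and> 0 < \<phi> I \<and> \<phi> I < 2 * pi"
    and "continuous_on sphS \<zeta>"
    and "continuous_on sphS \<phi>"
  shows "slice_domain \<Omega>"
proof -
  have slices: "\<forall>I\<in>sphS. \<Omega> \<inter> sliceL I = angle_set I (\<zeta> I) (\<phi> I) \<and> 0 < \<phi> I"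
    using assms(2) by blast
  then have slices_connected: "\<forall>I\<in>sphS. connected (\<Omega> \<inter> sliceL I)"
    by (simp add: connected_angle_set)
  have meets_reals: "\<Omega> \<inter> range qreal \<noteq> {}"
    using angle_slices_meet_reals[OF slices assms(3)] .
  then have "\<Omega> \<inter> sliceL I \<noteq> {}" for I
    using qreal_in_sliceL by blast
  moreover have "openin (top_of_set (sliceL I)) (\<Omega> \<inter> sliceL I)" for I
    using assms(1) by (metis Int_commute openin_open_Int)
  ultimately show ?thesis
    unfolding slice_domain_def
    using assms(1) meets_reals slices_connected
      connected_if_connected_slices_meet_reals[OF slices_connected meets_reals] by blast
qed

end
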